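(* Let $\mathcal{H}=(V,E)$ be a linear hypergraph such that $\mathrm{ar}(\mathcal{H})\ge |V|^{1/2}$. Then $$\mathrm{q}(\mathcal{H})\le \Delta([\mathcal{H}]_2)+1.$$
   Context: A hypergraph $\mathcal{H}=(V,E)$ has a finite vertex set $V$ and a finite set $E$ of nonempty subsets of $V$ (hyperedges). It is linear if $|e\cap e'|\le 1$ for all distinct $e,e'\in E$. The antirank $\mathrm{ar}(\mathcal{H})$ is the minimum cardinality of a hyperedge (set to $\infty$ if $E=\varnothing$). The 2-section $[\mathcal{H}]_2$ is the simple graph on $V$ in which two distinct vertices are adjacent iff some hyperedge contains both; $\Delta([\mathcal{H}]_2)$ is its maximum degree. The chromatic index $\mathrm{q}(\mathcal{H})$ is the least $k$ such that the hyperedges can be colored with $k$ colors so that any two distinct intersecting hyperedges receive different colors. *)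

theory Defs
  imports "HOL-Analysis.Analysis"
begin

definition hypergraph :: "'a set \<Rightarrow> 'a set set \<Rightarrow> bool" where
  "hypergraph V E \<longleftrightarrow> finite V \<and> (\<forall>e\<in>E. e \<noteq> {} \<and> e \<subseteq> V)"

definition linear_hg :: "'a set set \<Rightarrow> bool" where
  "linear_hg E \<longleftrightarrow> (\<forall>e\<in>E. \<forall>e'\<in>E. e \<noteq> e' \<longrightarrow> card (e \<inter> e') \<le> 1)"

definition antirank :: "'a set set \<Rightarrow> ereal" where
  "antirank E = (if E = {} then \<infinity> else ereal (real (Min (card ` E))))"

definition sec2_adj :: "'a set set \<Rightarrow> 'a \<Rightarrow> 'a \<Rightarrow> bool" where
  "sec2_adj E u v \<longleftrightarrow> u \<noteq> v \<and> (\<exists>e\<in>E. u \<in> e \<and> v \<in> e)"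

definition sec2_degree :: "'a set \<Rightarrow> 'a set set \<Rightarrow> 'a \<Rightarrow> nat" where
  "sec2_degree V E v = card {u\<in>V. sec2_adj E v u}"

definition sec2_max_degree :: "'a set \<Rightarrow> 'a set set \<Rightarrow> nat" where
  "sec2_max_degree V E = Max (insert 0 (sec2_degree V E ` V))"

definition proper_edge_coloring :: "'a set set \<Rightarrow> nat \<Rightarrow> ('a set \<Rightarrow> nat) \<Rightarrow> bool" where
  "proper_edge_coloring E k c \<longleftrightarrow>
     (\<forall>e\<in>E. c e < k) \<and>
     (\<forall>e\<in>E. \<forall>e'\<in>E. e \<noteq> e' \<and> e \<inter> e' \<noteq> {} \<longrightarrow> c e \<noteq> c e')"

definition chromatic_index :: "'a set set \<Rightarrow> nat" where
  "chromatic_index E = (LEAST k. \<exists>c. proper_edge_coloring E k c)"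

end

theory Submission
  imports Defs
begin

text \<open>An edge meeting at most \<open>\<Delta>\<close> other edges can be coloured last, so by induction on the
number of edges the only obstruction is a hypergraph in which every edge meets more than \<open>\<Delta>\<close>
others. For a smallest edge \<open>e\<close>, of size \<open>r\<close>, double counting the 2-section degrees of its
vertices against \<open>n \<le> r\<^sup>2\<close> forces \<open>n = r\<^sup>2\<close>, full degree \<open>n - 1\<close> at the vertices of \<open>e\<close>
and size \<open>r\<close> for all edges through them; propagating along edges, the hypergraph is an affine
plane of order \<open>r\<close>. Colouring each line by its parallel through a fixed point then uses
\<open>r + 1 \<le> r\<^sup>2 = \<Delta> + 1\<close> colours.\<close>

definition meeting_edges :: "'a set set \<Rightarrow> 'a set \<Rightarrow> 'a set set" where
  "meeting_edges E e = {f\<in>E. f \<noteq> e \<and> f \<inter> e \<noteq> {}}"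

lemma hypergraph_subset: "hypergraph V E \<Longrightarrow> E' \<subseteq> E \<Longrightarrow> hypergraph V E'"
  unfolding hypergraph_def by blast

lemma linear_hg_subset: "linear_hg E \<Longrightarrow> E' \<subseteq> E \<Longrightarrow> linear_hg E'"
  unfolding linear_hg_def by blast

lemma hypergraph_finite_edges: "hypergraph V E \<Longrightarrow> finite E"
  unfolding hypergraph_def by (meson PowI finite_Pow_iff finite_subset subsetI)

lemma hypergraph_finite_edge: "hypergraph V E \<Longrightarrow> e \<in> E \<Longrightarrow> finite e"
  unfolding hypergraph_def by (meson finite_subset)

lemma linear_hg_Int_eq_singleton:
  assumes "linear_hg E" "e \<in> E" "f \<in> E" "e \<noteq> f" "finite e" "x \<in> e" "x \<in> f"
  shows "e \<inter> f = {x}"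
proof -
  have "card (e \<inter> f) \<le> 1" using assms(1-4) unfolding linear_hg_def by blast
  then show ?thesis using assms(5-7) by (auto simp: card_le_Suc0_iff_eq)
qed

lemma sec2_degree_le_max: "finite V \<Longrightarrow> v \<in> V \<Longrightarrow> sec2_degree V E v \<le> sec2_max_degree V E"
  unfolding sec2_max_degree_def by simp

lemma sec2_degree_le_card:
  assumes "finite V" "v \<in> V"
  shows "sec2_degree V E v \<le> card V - 1"
proof -
  have "{u\<in>V. sec2_adj E v u} \<subseteq> V - {v}" unfolding sec2_adj_def by auto
  then have "sec2_degree V E v \<le> card (V - {v})"
    unfolding sec2_degree_def using assms(1) by (intro card_mono) auto
  then show ?thesis using assms by simp
qed

lemma sec2_max_degree_le_card:
  assumes "finite V"
  shows "sec2_max_degree V E \<le> card V - 1"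
  unfolding sec2_max_degree_def
  using assms sec2_degree_le_card[OF assms, of _ E] by (subst Max_le_iff) auto

lemma sec2_max_degree_mono:
  assumes "finite V" "E' \<subseteq> E"
  shows "sec2_max_degree V E' \<le> sec2_max_degree V E"
proof -
  have "sec2_degree V E' v \<le> sec2_degree V E v" if "v \<in> V" for v
    unfolding sec2_degree_def sec2_adj_def using assms by (intro card_mono) auto
  then have "sec2_degree V E' v \<le> sec2_max_degree V E" if "v \<in> V" for v
    using sec2_degree_le_max[OF assms(1) that, of E] that by (meson le_trans)
  then show ?thesis
    using assms(1) unfolding sec2_max_degree_def[of V E'] by (subst Max_le_iff) auto
qed

lemma sec2_degree_eq_card_iff:
  assumes "finite V" "v \<in> V"
  shows "sec2_degree V E v = card V - 1 \<longleftrightarrow> (\<forall>u\<in>V. u \<noteq> v \<longrightarrow> sec2_adj E v u)"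
proof -
  have sub: "{u\<in>V. sec2_adj E v u} \<subseteq> V - {v}" unfolding sec2_adj_def by auto
  have "sec2_degree V E v = card (V - {v}) \<longleftrightarrow> {u\<in>V. sec2_adj E v u} = V - {v}"
  proof
    assume "sec2_degree V E v = card (V - {v})"
    then show "{u\<in>V. sec2_adj E v u} = V - {v}"
      using card_subset_eq[OF _ sub] assms(1) unfolding sec2_degree_def by blast
  qed (simp add: sec2_degree_def)
  also have "\<dots> \<longleftrightarrow> (\<forall>u\<in>V. u \<noteq> v \<longrightarrow> sec2_adj E v u)" using sub by blast
  finally show ?thesis using assms by simp
qed

lemma sec2_full_degree_imp_common_edge:
  assumes "finite V" "w \<in> V" "sec2_degree V E w = card V - 1" "u \<in> V" "u \<noteq> w"
  shows "\<exists>f\<in>E. w \<in> f \<and> u \<in> f"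
  using sec2_degree_eq_card_iff[OF assms(1,2)] assms(3-5) unfolding sec2_adj_def by blast

lemma linear_sec2_degree_eq_sum:
  assumes hg: "hypergraph V E" and lin: "linear_hg E" and v: "v \<in> V"
  shows "sec2_degree V E v = (\<Sum>f\<in>{f\<in>E. v \<in> f}. card f - 1)"
proof -
  have "{u\<in>V. sec2_adj E v u} = (\<Union>f\<in>{f\<in>E. v \<in> f}. f - {v})"
    using hg unfolding sec2_adj_def hypergraph_def by blast
  also have "card \<dots> = (\<Sum>f\<in>{f\<in>E. v \<in> f}. card (f - {v}))"
  proof (rule card_UN_disjoint)
    show "finite {f\<in>E. v \<in> f}" using hypergraph_finite_edges[OF hg] by simp
    show "\<forall>f\<in>{f\<in>E. v \<in> f}. finite (f - {v})" using hypergraph_finite_edge[OF hg] by blast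
    show "\<forall>f\<in>{f\<in>E. v \<in> f}. \<forall>g\<in>{f\<in>E. v \<in> f}. f \<noteq> g \<longrightarrow> (f - {v}) \<inter> (g - {v}) = {}"
      using linear_hg_Int_eq_singleton[OF lin] hypergraph_finite_edge[OF hg] by blast
  qed
  also have "\<dots> = (\<Sum>f\<in>{f\<in>E. v \<in> f}. card f - 1)"
    using hypergraph_finite_edge[OF hg] by (intro sum.cong) auto
  finally show ?thesis unfolding sec2_degree_def .
qed

lemma linear_sec2_degree_ge:
  assumes "hypergraph V E" "linear_hg E" "v \<in> V" "\<forall>f\<in>E. r \<le> card f"
  shows "(r - 1) * card {f\<in>E. v \<in> f} \<le> sec2_degree V E v"
proof -
  have "(r - 1) * card {f\<in>E. v \<in> f} = (\<Sum>f\<in>{f\<in>E. v \<in> f}. r - 1)" by simp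
  also have "\<dots> \<le> (\<Sum>f\<in>{f\<in>E. v \<in> f}. card f - 1)"
    using assms(4) by (intro sum_mono) auto
  finally show ?thesis using linear_sec2_degree_eq_sum[OF assms(1-3)] by simp
qed

lemma linear_sec2_degree_eq_imp_card:
  assumes "hypergraph V E" "linear_hg E" "v \<in> V" "\<forall>f\<in>E. r \<le> card f" "0 < r"
    and "sec2_degree V E v = (r - 1) * card {f\<in>E. v \<in> f}"
    and "f \<in> E" "v \<in> f"
  shows "card f = r"
proof -
  have "(\<Sum>f\<in>{f\<in>E. v \<in> f}. r - 1) = (\<Sum>f\<in>{f\<in>E. v \<in> f}. card f - 1)"
    using assms(6) linear_sec2_degree_eq_sum[OF assms(1-3)] by simp
  then have "r - 1 = card f - 1"
  proof (rule sum_mono_inv)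
    show "r - 1 \<le> card f - 1" if "f \<in> {f\<in>E. v \<in> f}" for f
      using that assms(4) by (simp add: diff_le_mono)
    show "f \<in> {f\<in>E. v \<in> f}" using assms(7,8) by simp
    show "finite {f\<in>E. v \<in> f}" using hypergraph_finite_edges[OF assms(1)] by simp
  qed
  then show ?thesis using assms(4,5,7) by fastforce
qed

lemma card_meeting_edges_le:
  assumes hg: "hypergraph V E" and e: "e \<in> E"
  shows "card (meeting_edges E e) + card e \<le> (\<Sum>u\<in>e. card {f\<in>E. u \<in> f})"
proof -
  have "meeting_edges E e = (\<Union>u\<in>e. {f\<in>E. u \<in> f} - {e})" unfolding meeting_edges_def by blast
  then have meeting_le: "card (meeting_edges E e) \<le> (\<Sum>u\<in>e. card ({f\<in>E. u \<in> f} - {e}))"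
    using card_UN_le[OF hypergraph_finite_edge[OF hg e], of "\<lambda>u. {f\<in>E. u \<in> f} - {e}"]
    by (simp only:)
  have star: "card ({f\<in>E. u \<in> f} - {e}) + 1 = card {f\<in>E. u \<in> f}" if "u \<in> e" for u
  proof -
    have "0 < card {f\<in>E. u \<in> f}"
      using that e hypergraph_finite_edges[OF hg] by (auto simp: card_gt_0_iff)
    then show ?thesis using that e by simp
  qed
  have "(\<Sum>u\<in>e. card ({f\<in>E. u \<in> f} - {e})) + card e
      = (\<Sum>u\<in>e. card ({f\<in>E. u \<in> f} - {e}) + 1)"
    by (subst sum.distrib) simp
  also have "\<dots> = (\<Sum>u\<in>e. card {f\<in>E. u \<in> f})"
    by (rule sum.cong[OF refl]) (rule star)
  finally show ?thesis using meeting_le by linarith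
qed

lemma proper_edge_coloring_mono:
  "proper_edge_coloring E k c \<Longrightarrow> k \<le> k' \<Longrightarrow> proper_edge_coloring E k' c"
  unfolding proper_edge_coloring_def by fastforce

lemma proper_edge_coloring_extend:
  assumes "finite E" and c: "proper_edge_coloring (E - {e}) k c"
    and small: "card (meeting_edges E e) < k"
  shows "\<exists>c'. proper_edge_coloring E k c'"
proof -
  have "card (c ` meeting_edges E e) < card {0..<k}"
    using small card_image_le[of "meeting_edges E e" c] assms(1)
    unfolding meeting_edges_def by simp
  moreover have "finite (c ` meeting_edges E e)" using assms(1) unfolding meeting_edges_def by simp
  ultimately have "\<not> {0..<k} \<subseteq> c ` meeting_edges E e" by (meson card_mono not_le)
  then obtain col where col: "col < k" "col \<notin> c ` meeting_edges E e"
    by (meson atLeastLessThan_iff subsetI zero_le)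
  have "proper_edge_coloring E k (c(e := col))"
    using c col unfolding proper_edge_coloring_def meeting_edges_def
    by (auto simp: Int_commute)
  then show ?thesis by blast
qed

lemma min_crowded_edge_degrees:
  assumes hg: "hypergraph V E" and lin: "linear_hg E" and sq: "\<forall>f\<in>E. card V \<le> card f ^ 2"
    and e: "e \<in> E" and min: "\<forall>f\<in>E. card e \<le> card f"
    and crowded: "sec2_max_degree V E < card (meeting_edges E e)"
  shows "sec2_max_degree V E = card e ^ 2 - 1"
    and "u \<in> e \<Longrightarrow> sec2_degree V E u = sec2_max_degree V E"
    and "u \<in> e \<Longrightarrow> sec2_degree V E u = (card e - 1) * card {f\<in>E. u \<in> f}"
proof -
  define r where "r = card e"
  define m where "m = r - 1"
  define \<Delta> where "\<Delta> = sec2_max_degree V E"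
  define d where "d u = card {f\<in>E. u \<in> f}" for u
  have finV: "finite V" and eV: "e \<subseteq> V" "e \<noteq> {}" using hg e unfolding hypergraph_def by auto
  have fine: "finite e" using finV eV finite_subset by blast
  have r: "r = m + 1" using fine eV unfolding m_def r_def by (simp add: card_gt_0_iff)
  have low: "m * d u \<le> sec2_degree V E u" if "u \<in> e" for u
    using linear_sec2_degree_ge[OF hg lin, of u r] that eV min unfolding m_def r_def d_def by auto
  have high: "sec2_degree V E u \<le> \<Delta>" if "u \<in> e" for u
    using sec2_degree_le_max[OF finV] that eV unfolding \<Delta>_def by auto
  have "card V \<le> (m + 1) ^ 2" using sq e r unfolding r_def by metis
  then have \<Delta>_le: "\<Delta> \<le> m * (m + 2)"
    using sec2_max_degree_le_card[OF finV, of E] unfolding \<Delta>_def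
    by (simp add: power2_eq_square algebra_simps)
  text \<open>Termwise \<open>m d(u) \<le> deg u \<le> \<Delta>\<close>, while summing over \<open>e\<close> and counting meeting edges gives
    \<open>\<Sum> m d(u) \<ge> m (\<Delta> + 1 + r)\<close>; as \<open>\<Delta> \<le> n - 1 \<le> m (m + 2)\<close>, every inequality is tight.\<close>
  have "\<Delta> + 1 + r \<le> (\<Sum>u\<in>e. d u)"
    using card_meeting_edges_le[OF hg e] crowded unfolding \<Delta>_def r_def d_def by simp
  then have "m * (\<Delta> + 1 + r) \<le> m * (\<Sum>u\<in>e. d u)" by (rule mult_le_mono2)
  also have "\<dots> = (\<Sum>u\<in>e. m * d u)" by (simp add: sum_distrib_left)
  finally have sum_ge: "m * (\<Delta> + 1 + r) \<le> (\<Sum>u\<in>e. m * d u)" .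
  have "(\<Sum>u\<in>e. m * d u) \<le> (\<Sum>u\<in>e. \<Delta>)" using low high by (intro sum_mono) (meson le_trans)
  also have "\<dots> = r * \<Delta>" unfolding r_def by simp
  finally have sum_le: "(\<Sum>u\<in>e. m * d u) \<le> r * \<Delta>" .
  have \<Delta>: "\<Delta> = m * (m + 2)"
    using sum_ge sum_le \<Delta>_le unfolding r by (simp add: algebra_simps)
  then show "sec2_max_degree V E = card e ^ 2 - 1"
    unfolding \<Delta>_def r_def[symmetric] r by (simp add: power2_eq_square algebra_simps)
  have "(\<Sum>u\<in>e. m * d u) = r * \<Delta>"
    using \<Delta> sum_ge sum_le unfolding r by (simp add: algebra_simps)
  also have "\<dots> = (\<Sum>u\<in>e. \<Delta>)" unfolding r_def by simp
  finally have md: "m * d u = \<Delta>" if "u \<in> e" for u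
    using sum_mono_inv[of "\<lambda>u. m * d u" e "\<lambda>_. \<Delta>" u] low high that fine by (meson le_trans)
  show "sec2_degree V E u = sec2_max_degree V E" if "u \<in> e"
    using low high md that unfolding \<Delta>_def by (metis le_antisym)
  then show "sec2_degree V E u = (card e - 1) * card {f\<in>E. u \<in> f}" if "u \<in> e"
    using md that unfolding \<Delta>_def m_def r_def d_def by simp
qed

lemma min_crowded_edge_tight:
  assumes hg: "hypergraph V E" and lin: "linear_hg E" and sq: "\<forall>f\<in>E. card V \<le> card f ^ 2"
    and e: "e \<in> E" and min: "\<forall>f\<in>E. card e \<le> card f"
    and "sec2_max_degree V E < card (meeting_edges E e)"
  shows "card V = card e ^ 2"
    and "u \<in> e \<Longrightarrow> sec2_degree V E u = card V - 1"
    and "u \<in> e \<Longrightarrow> f \<in> E \<Longrightarrow> u \<in> f \<Longrightarrow> card f = card e"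
proof -
  note degrees = min_crowded_edge_degrees[OF assms]
  have finV: "finite V" and eV: "e \<subseteq> V" "e \<noteq> {}" using hg e unfolding hypergraph_def by auto
  then have "0 < card V" by (auto simp: card_gt_0_iff)
  then show card_V: "card V = card e ^ 2"
    using degrees(1) sec2_max_degree_le_card[OF finV, of E] sq e by fastforce
  show "sec2_degree V E u = card V - 1" if "u \<in> e"
    using degrees(1) degrees(2)[OF that] card_V by simp
  have "0 < card e" using finV eV finite_subset by (auto simp: card_gt_0_iff)
  then show "card f = card e" if "u \<in> e" "f \<in> E" "u \<in> f"
    using linear_sec2_degree_eq_imp_card[OF hg lin, of u "card e" f] degrees(3) that eV min
    by auto
qed

definition parallel_edges :: "'a set \<Rightarrow> 'a set \<Rightarrow> bool" where
  "parallel_edges f g \<longleftrightarrow> f = g \<or> f \<inter> g = {}"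

lemma parallel_edges_sym: "parallel_edges f g \<longleftrightarrow> parallel_edges g f"
  unfolding parallel_edges_def by blast

locale affine_plane =
  fixes V :: "'a set" and E :: "'a set set" and r :: nat
  assumes hypergraph: "hypergraph V E"
    and linear: "linear_hg E"
    and order: "2 \<le> r"
    and card_points: "card V = r ^ 2"
    and card_line: "f \<in> E \<Longrightarrow> card f = r"
    and line_through: "u \<in> V \<Longrightarrow> w \<in> V \<Longrightarrow> u \<noteq> w \<Longrightarrow> \<exists>f\<in>E. u \<in> f \<and> w \<in> f"
begin

lemma finite_points: "finite V"
  using hypergraph unfolding hypergraph_def by simp

lemma line_subset: "f \<in> E \<Longrightarrow> f \<subseteq> V"
  using hypergraph unfolding hypergraph_def by simp

lemma finite_line: "f \<in> E \<Longrightarrow> finite f"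
  using finite_points line_subset finite_subset by blast

lemma sec2_degree_eq:
  assumes "w \<in> V"
  shows "sec2_degree V E w = card V - 1"
proof -
  have "\<forall>u\<in>V. u \<noteq> w \<longrightarrow> sec2_adj E w u"
    using line_through[OF assms] unfolding sec2_adj_def by blast
  then show ?thesis using sec2_degree_eq_card_iff[OF finite_points assms] by blast
qed

lemma order_le_sec2_max_degree: "r \<le> sec2_max_degree V E"
proof -
  obtain w where "w \<in> V" using card_points order by fastforce
  then have "card V - 1 \<le> sec2_max_degree V E"
    using sec2_degree_eq sec2_degree_le_max[OF finite_points] by metis
  moreover have "r \<le> r ^ 2 - 1"
    using mult_le_mono1[OF order, of r] order unfolding power2_eq_square by linarith
  ultimately show ?thesis using card_points by simp
qed

lemma card_lines_through:
  assumes w: "w \<in> V"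
  shows "card {f\<in>E. w \<in> f} = r + 1"
proof -
  have "r ^ 2 - 1 = card {f\<in>E. w \<in> f} * (r - 1)"
    using linear_sec2_degree_eq_sum[OF hypergraph linear w] sec2_degree_eq[OF w] card_points card_line
    by simp
  moreover have "r ^ 2 - 1 = (r + 1) * (r - 1)"
    by (simp add: power2_eq_square right_diff_distrib' algebra_simps)
  moreover have "r - 1 \<noteq> 0" using order by simp
  ultimately show ?thesis by (metis mult_right_cancel)
qed

lemma card_lines_through_meeting:
  assumes L: "L \<in> E" and w: "w \<in> V" "w \<notin> L"
  shows "card {f\<in>E. w \<in> f \<and> f \<inter> L \<noteq> {}} = r"
proof -
  define M where "M = {f\<in>E. w \<in> f \<and> f \<inter> L \<noteq> {}}"
  have finM: "finite M" using hypergraph_finite_edges[OF hypergraph] unfolding M_def by simp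
  have "L \<subseteq> (\<Union>f\<in>M. f \<inter> L)"
  proof
    fix x assume x: "x \<in> L"
    have "x \<in> V" "w \<noteq> x" using x line_subset[OF L] w(2) by auto
    then obtain f where "f \<in> E" "w \<in> f" "x \<in> f" using line_through[OF w(1)] by blast
    with x show "x \<in> (\<Union>f\<in>M. f \<inter> L)" unfolding M_def by blast
  qed
  then have "(\<Union>f\<in>M. f \<inter> L) = L" by blast
  then have "card L = card (\<Union>f\<in>M. f \<inter> L)" by simp
  also have "\<dots> = (\<Sum>f\<in>M. card (f \<inter> L))"
  proof (rule card_UN_disjoint[OF finM])
    show "\<forall>f\<in>M. finite (f \<inter> L)" using finite_line[OF L] by simp
    show "\<forall>f\<in>M. \<forall>g\<in>M. f \<noteq> g \<longrightarrow> (f \<inter> L) \<inter> (g \<inter> L) = {}"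
    proof (intro ballI impI)
      fix f g assume "f \<in> M" "g \<in> M" "f \<noteq> g"
      then have "f \<inter> g = {w}"
        using linear_hg_Int_eq_singleton[OF linear, of f g w] finite_line unfolding M_def by auto
      moreover have "(f \<inter> L) \<inter> (g \<inter> L) = (f \<inter> g) \<inter> L" by blast
      ultimately show "(f \<inter> L) \<inter> (g \<inter> L) = {}" using w(2) by simp
    qed
  qed
  also have "\<dots> = (\<Sum>f\<in>M. 1)"
  proof (rule sum.cong[OF refl])
    fix f assume f: "f \<in> M"
    then obtain x where "x \<in> f" "x \<in> L" unfolding M_def by blast
    moreover have "f \<noteq> L" using f w(2) unfolding M_def by blast
    ultimately have "f \<inter> L = {x}"
      using linear_hg_Int_eq_singleton[OF linear, of f L x] f L finite_line unfolding M_def by blast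
    then show "card (f \<inter> L) = 1" by simp
  qed
  finally show ?thesis using card_line[OF L] unfolding M_def by simp
qed

lemma card_disjoint_lines_through:
  assumes "L \<in> E" "w \<in> V" "w \<notin> L"
  shows "card {f\<in>E. w \<in> f \<and> f \<inter> L = {}} = 1"
proof -
  have "{f\<in>E. w \<in> f} = {f\<in>E. w \<in> f \<and> f \<inter> L \<noteq> {}} \<union> {f\<in>E. w \<in> f \<and> f \<inter> L = {}}" by blast
  moreover have "finite E" using hypergraph_finite_edges[OF hypergraph] .
  ultimately have "card {f\<in>E. w \<in> f}
      = card {f\<in>E. w \<in> f \<and> f \<inter> L \<noteq> {}} + card {f\<in>E. w \<in> f \<and> f \<inter> L = {}}"
    by (simp add: card_Un_disjoint disjoint_iff)
  then show ?thesis using card_lines_through[OF assms(2)] card_lines_through_meeting[OF assms] by simp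
qed

lemma parallel_through:
  assumes "L \<in> E" "w \<in> V"
  shows "\<exists>f\<in>E. w \<in> f \<and> parallel_edges f L"
proof (cases "w \<in> L")
  case True
  then show ?thesis using assms(1) unfolding parallel_edges_def by blast
next
  case False
  obtain f where "{f\<in>E. w \<in> f \<and> f \<inter> L = {}} = {f}"
    using card_disjoint_lines_through[OF assms False] by (rule card_1_singletonE)
  then have "f \<in> {f\<in>E. w \<in> f \<and> f \<inter> L = {}}" by simp
  then show ?thesis unfolding parallel_edges_def by blast
qed

lemma parallel_through_unique:
  assumes L: "L \<in> E" and f: "f \<in> E" "w \<in> f" "parallel_edges f L"
    and g: "g \<in> E" "w \<in> g" "parallel_edges g L"
  shows "f = g"
proof (cases "w \<in> L")
  case True
  with f g show ?thesis unfolding parallel_edges_def by blast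
next
  case False
  have "w \<in> V" using f(1,2) line_subset by blast
  then have "card {h\<in>E. w \<in> h \<and> h \<inter> L = {}} = 1"
    using card_disjoint_lines_through[OF L _ False] by blast
  moreover have "f \<in> {h\<in>E. w \<in> h \<and> h \<inter> L = {}}" "g \<in> {h\<in>E. w \<in> h \<and> h \<inter> L = {}}"
    using f g False unfolding parallel_edges_def by auto
  ultimately show ?thesis by (metis card_1_singletonE singletonD)
qed

lemma edge_colorable: "\<exists>c. proper_edge_coloring E (r + 1) c"
proof -
  obtain v0 where v0: "v0 \<in> V" using card_points order by fastforce
  define P where "P = {f\<in>E. v0 \<in> f}"
  have "finite P" using hypergraph_finite_edges[OF hypergraph] unfolding P_def by simp
  then obtain h where h: "bij_betw h P {0..<r + 1}"
    using card_lines_through[OF v0] finite_same_card_bij[of P "{0..<r + 1}"] unfolding P_def by auto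
  have "\<forall>f\<in>E. \<exists>g. g \<in> P \<and> parallel_edges g f"
    using parallel_through[OF _ v0] unfolding P_def by blast
  then obtain par where par: "\<forall>f\<in>E. par f \<in> P \<and> parallel_edges (par f) f"
    by (rule bchoice[THEN exE])
  have par_inj: "par f \<noteq> par f'" if "f \<in> E" "f' \<in> E" "f \<noteq> f'" "w \<in> f" "w \<in> f'" for f f' w
  proof
    assume same: "par f = par f'"
    have "parallel_edges f (par f)" "parallel_edges f' (par f')"
      using par that(1,2) parallel_edges_sym by blast+
    then have "parallel_edges f (par f)" "parallel_edges f' (par f)" using same by simp_all
    moreover have "par f \<in> E" using par that(1) unfolding P_def by blast
    ultimately have "f = f'"
      using parallel_through_unique[of "par f" f w f'] that(1,2,4,5) by blast
    with that(3) show False ..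
  qed
  have "proper_edge_coloring E (r + 1) (h \<circ> par)"
    unfolding proper_edge_coloring_def
  proof (intro conjI ballI impI)
    show "(h \<circ> par) f < r + 1" if "f \<in> E" for f
      using par that h unfolding bij_betw_def by auto
    show "(h \<circ> par) f \<noteq> (h \<circ> par) f'"
      if f: "f \<in> E" "f' \<in> E" and meet: "f \<noteq> f' \<and> f \<inter> f' \<noteq> {}" for f f'
    proof -
      obtain w where "w \<in> f" "w \<in> f'" using meet by blast
      then have "par f \<noteq> par f'" using par_inj f meet by blast
      moreover have "par f \<in> P" "par f' \<in> P" using par f by blast+
      ultimately show ?thesis using bij_betw_imp_inj_on[OF h] by (simp add: inj_on_eq_iff)
    qed
  qed
  then show ?thesis by blast
qed

end

lemma crowded_imp_full_degree_uniform:
  assumes hg: "hypergraph V E" and lin: "linear_hg E" and sq: "\<forall>f\<in>E. card V \<le> card f ^ 2"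
    and e0: "e0 \<in> E" and min: "\<forall>f\<in>E. card e0 \<le> card f"
    and crowded: "\<forall>e\<in>E. sec2_max_degree V E < card (meeting_edges E e)"
  shows "w \<in> V \<Longrightarrow> sec2_degree V E w = card V - 1"
    and "f \<in> E \<Longrightarrow> card f = card e0"
proof -
  have finV: "finite V" using hg unfolding hypergraph_def by simp
  have edge: "f \<subseteq> V" "f \<noteq> {}" if "f \<in> E" for f
    using hg that unfolding hypergraph_def by auto
  obtain v0 where v0: "v0 \<in> e0" using edge(2)[OF e0] by blast
  have v0V: "v0 \<in> V" using edge(1)[OF e0] v0 by blast
  note tight0 = min_crowded_edge_tight[OF hg lin sq e0 min crowded[rule_format, OF e0]]
  have point: "sec2_degree V E w = card V - 1 \<and> (\<forall>f\<in>E. w \<in> f \<longrightarrow> card f = card e0)"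
    if w: "w \<in> V" for w
  proof (cases "w = v0")
    case True
    then show ?thesis using tight0(2,3) v0 by blast
  next
    case False
    then obtain f where f: "f \<in> E" "v0 \<in> f" "w \<in> f"
      using sec2_full_degree_imp_common_edge[OF finV v0V tight0(2)[OF v0] w] by blast
    have "card f = card e0" using tight0(3)[OF v0 f(1,2)] .
    then have "\<forall>g\<in>E. card f \<le> card g" using min by simp
    note tight = min_crowded_edge_tight[OF hg lin sq f(1) this crowded[rule_format, OF f(1)]]
    show ?thesis using tight(2,3)[OF f(3)] \<open>card f = card e0\<close> by simp
  qed
  then show "sec2_degree V E w = card V - 1" if "w \<in> V" using that by blast
  show "card f = card e0" if f: "f \<in> E"
  proof -
    obtain w where "w \<in> f" using edge(2)[OF f] by blast
    then show ?thesis using point edge(1)[OF f] f by blast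
  qed
qed

lemma crowded_imp_affine_plane:
  assumes hg: "hypergraph V E" and lin: "linear_hg E" and sq: "\<forall>f\<in>E. card V \<le> card f ^ 2"
    and "E \<noteq> {}" and crowded: "\<forall>e\<in>E. sec2_max_degree V E < card (meeting_edges E e)"
  shows "\<exists>r. affine_plane V E r"
proof -
  have finV: "finite V" using hg unfolding hypergraph_def by simp
  have finite_edge: "finite f" if "f \<in> E" for f using hypergraph_finite_edge[OF hg that] .
  obtain e1 where "e1 \<in> E" using \<open>E \<noteq> {}\<close> by blast
  then obtain e0 where e0: "e0 \<in> E" "\<forall>f\<in>E. card e0 \<le> card f"
    using ex_has_least_nat[of "\<lambda>f. f \<in> E" e1 card] by blast
  define r where "r = card e0"
  note full_uniform = crowded_imp_full_degree_uniform[OF hg lin sq e0 crowded]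
  have card_line: "card f = r" if "f \<in> E" for f using full_uniform(2)[OF that] unfolding r_def .
  have "2 \<le> r"
  proof (rule ccontr)
    assume "\<not> 2 \<le> r"
    moreover have "0 < r"
      using e0(1) hg finite_edge unfolding r_def hypergraph_def by (simp add: card_gt_0_iff)
    ultimately have r1: "r = 1" by simp
    have "meeting_edges E e0 \<noteq> {}" using crowded e0(1) by fastforce
    then obtain g u where g: "g \<in> E" "g \<noteq> e0" "u \<in> g" "u \<in> e0" unfolding meeting_edges_def by blast
    have "{u} = g" using card_seteq[OF finite_edge[OF g(1)], of "{u}"] g(3) card_line[OF g(1)] r1 by simp
    moreover have "{u} = e0"
      using card_seteq[OF finite_edge[OF e0(1)], of "{u}"] g(4) card_line[OF e0(1)] r1 by simp
    ultimately show False using g(2) by simp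
  qed
  have "affine_plane V E r"
  proof
    show "card V = r ^ 2"
      using min_crowded_edge_tight(1)[OF hg lin sq e0 crowded[rule_format, OF e0(1)]]
      unfolding r_def .
    show "\<exists>f\<in>E. u \<in> f \<and> w \<in> f" if "u \<in> V" "w \<in> V" "u \<noteq> w" for u w
      using sec2_full_degree_imp_common_edge[OF finV that(1) full_uniform(1)[OF that(1)] that(2)]
        that(3) by blast
  qed (use hg lin \<open>2 \<le> r\<close> card_line in auto)
  then show ?thesis by blast
qed

lemma linear_hg_edge_colorable:
  assumes "hypergraph V E" "linear_hg E" "\<forall>e\<in>E. card V \<le> card e ^ 2"
  shows "\<exists>c. proper_edge_coloring E (sec2_max_degree V E + 1) c"
  using hypergraph_finite_edges[OF assms(1)] assms
proof (induction E rule: finite_psubset_induct)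
  case (psubset E)
  define \<Delta> where "\<Delta> = sec2_max_degree V E"
  show ?case
  proof (cases "\<exists>e\<in>E. card (meeting_edges E e) \<le> \<Delta>")
    case True
    then obtain e where e: "e \<in> E" "card (meeting_edges E e) \<le> \<Delta>" by blast
    have "E - {e} \<subset> E" using e(1) by blast
    moreover have "hypergraph V (E - {e})" "linear_hg (E - {e})"
      using hypergraph_subset[OF psubset.prems(1)] linear_hg_subset[OF psubset.prems(2)] by simp_all
    moreover have "\<forall>f\<in>E - {e}. card V \<le> card f ^ 2" using psubset.prems(3) by simp
    ultimately obtain c where c: "proper_edge_coloring (E - {e}) (sec2_max_degree V (E - {e}) + 1) c"
      using psubset.IH by presburger
    have "finite V" using psubset.prems(1) unfolding hypergraph_def by simp
    then have "sec2_max_degree V (E - {e}) \<le> \<Delta>"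
      unfolding \<Delta>_def by (rule sec2_max_degree_mono) simp
    then have "proper_edge_coloring (E - {e}) (\<Delta> + 1) c"
      using proper_edge_coloring_mono[OF c] by simp
    then show ?thesis
      using proper_edge_coloring_extend[OF psubset.hyps] e(2) unfolding \<Delta>_def by simp
  next
    case False
    then have crowded: "\<forall>e\<in>E. \<Delta> < card (meeting_edges E e)" by auto
    show ?thesis
    proof (cases "E = {}")
      case True
      then show ?thesis unfolding proper_edge_coloring_def by simp
    next
      case False
      then obtain r where r: "affine_plane V E r"
        using crowded_imp_affine_plane[OF psubset.prems] crowded unfolding \<Delta>_def by blast
      then obtain c where "proper_edge_coloring E (r + 1) c" by (rule affine_plane.edge_colorable[THEN exE])
      moreover have "r + 1 \<le> \<Delta> + 1"
        using affine_plane.order_le_sec2_max_degree[OF r] unfolding \<Delta>_def by simp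
      ultimately show ?thesis unfolding \<Delta>_def by (blast intro: proper_edge_coloring_mono)
    qed
  qed
qed

lemma card_le_square_if_antirank_ge_sqrt:
  assumes "antirank E \<ge> ereal (sqrt (real (card V)))" "finite E" "e \<in> E"
  shows "card V \<le> card e ^ 2"
proof -
  have "E \<noteq> {}" using assms(3) by blast
  then have "sqrt (card V) \<le> Min (card ` E)"
    using assms(1) unfolding antirank_def by simp
  also have "\<dots> \<le> card e" using assms(2,3) by simp
  finally have "real (card V) \<le> real (card e) ^ 2" by (rule sqrt_le_D)
  then show ?thesis by (metis of_nat_le_iff of_nat_power)
qed

lemma chromatic_index_le: "proper_edge_coloring E k c \<Longrightarrow> chromatic_index E \<le> k"
  unfolding chromatic_index_def by (rule Least_le) blast

theorem theorem1p6:
  fixes V :: "'a set" and E :: "'a set set"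
  assumes "hypergraph V E"
    and "linear_hg E"
    and "antirank E \<ge> ereal (sqrt (real (card V)))"
  shows "chromatic_index E \<le> sec2_max_degree V E + 1"
proof -
  have "\<forall>e\<in>E. card V \<le> card e ^ 2"
    using card_le_square_if_antirank_ge_sqrt[OF assms(3) hypergraph_finite_edges[OF assms(1)]] ..
  then obtain c where "proper_edge_coloring E (sec2_max_degree V E + 1) c"
    using linear_hg_edge_colorable assms(1,2) by blast
  then show ?thesis by (rule chromatic_index_le)
qed

end
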